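(* Let $p\in(0,1)$, let $(a_j)_{j\ge1}$ be positive rational numbers with $\sum_{j=1}^\infty a_j=p$, and let $\epsilon:\mathbb N\to\mathbb R$ be monotonically non-increasing with $\lim_{N\to\infty}\epsilon(N)=0$ and $p-\sum_{j=1}^N a_j\le \epsilon(N)$ for all $N\in\mathbb N$. Let $X_1,X_2,\dots$ be independent Bernoulli$(1/2)$ random variables, run the algorithm described in the context, and let $N_M$ denote the number of series terms used when the algorithm terminates (the final value of the counter $N$). Then for every $n\in\mathbb N$, $$\Pr[N_M>n]<4\epsilon(n).$$ In addition, if there exist $r>1$, $K>0$ and $n_0$ such that $\epsilon(n)\le K/n^r$ for all $n\ge n_0$, then $\mathbb E[N_M]<\infty$.
   Context: The algorithm: initialise $N\leftarrow0$, $S\leftarrow0$, $E\leftarrow1$, $A\leftarrow0$, $s\leftarrow0$, $k\leftarrow0$. Repeat the following iteration: set $k\leftarrow k+1$ and $A\leftarrow A+s\cdot2^{-k}$; then, while none of the three conditions (i) $S+E\le A+2^{-k}$, (ii) $S>A+2^{-k}$, (iii) $S>A+\tfrac12 2^{-k}$ and $S+E\le A+\tfrac32 2^{-k}$ holds, do $N\leftarrow N+1$, $S\leftarrow S+a_N$, $E\leftarrow\epsilon(N)$; after this inner loop set $s\leftarrow0$ if (i) holds, else $s\leftarrow2$ if (ii) holds, else $s\leftarrow1$. The iteration is repeated until $X_k=0$ (coin $X_k$ is consumed at the end of iteration $k$). After the last iteration, output $Y=0$ if $s=0$, $Y=1$ if $s=2$, and $Y=X_{k+1}$ if $s=1$.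 *)

theory Defs
  imports "HOL-Probability.Probability"
begin

definition psum :: "(nat \<Rightarrow> real) \<Rightarrow> nat \<Rightarrow> real" where
  "psum a N = (\<Sum>j\<in>{1..N}. a j)"

text \<open>Error variable E after N series terms were used: initially E = 1, afterwards E = eps N.\<close>
definition errv :: "(nat \<Rightarrow> real) \<Rightarrow> nat \<Rightarrow> real" where
  "errv eps N = (if N = 0 then 1 else eps N)"

text \<open>The three stopping conditions of the inner loop in iteration k, with current A and N.\<close>
definition cond1 :: "(nat \<Rightarrow> real) \<Rightarrow> (nat \<Rightarrow> real) \<Rightarrow> real \<Rightarrow> nat \<Rightarrow> nat \<Rightarrow> bool" where
  "cond1 a eps A k N \<longleftrightarrow> psum a N + errv eps N \<le> A + (1/2)^k"

definition cond2 :: "(nat \<Rightarrow> real) \<Rightarrow> (nat \<Rightarrow> real) \<Rightarrow> real \<Rightarrow> nat \<Rightarrow> nat \<Rightarrow> bool" where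
  "cond2 a eps A k N \<longleftrightarrow> psum a N > A + (1/2)^k"

definition cond3 :: "(nat \<Rightarrow> real) \<Rightarrow> (nat \<Rightarrow> real) \<Rightarrow> real \<Rightarrow> nat \<Rightarrow> nat \<Rightarrow> bool" where
  "cond3 a eps A k N \<longleftrightarrow> psum a N > A + (1/2) * (1/2)^k \<and>
                         psum a N + errv eps N \<le> A + (3/2) * (1/2)^k"

definition stopc :: "(nat \<Rightarrow> real) \<Rightarrow> (nat \<Rightarrow> real) \<Rightarrow> real \<Rightarrow> nat \<Rightarrow> nat \<Rightarrow> bool" where
  "stopc a eps A k N \<longleftrightarrow> cond1 a eps A k N \<or> cond2 a eps A k N \<or> cond3 a eps A k N"

text \<open>One outer iteration: from the state (N, A, s) at the end of iteration k, perform
  iteration k+1. The inner while loop increments N until a stopping condition holds,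
  i.e. it yields the least m \<ge> N satisfying one of the conditions.
  (S and E are determined by N: S = psum a N, E = errv eps N.)\<close>
definition alg_step :: "(nat \<Rightarrow> real) \<Rightarrow> (nat \<Rightarrow> real) \<Rightarrow> nat \<Rightarrow> nat \<times> real \<times> nat \<Rightarrow> nat \<times> real \<times> nat" where
  "alg_step a eps k st =
     (let (N, A, s) = st;
          k' = Suc k;
          A' = A + real s * (1/2)^k';
          N' = (LEAST m. N \<le> m \<and> stopc a eps A' k' m);
          s' = (if cond1 a eps A' k' N' then 0 else if cond2 a eps A' k' N' then 2 else (1::nat))
      in (N', A', s'))"

text \<open>State (N, A, s) after k outer iterations (the iterations themselves do not depend on
  the coins; the coins only decide when to stop).\<close>
primrec alg_state :: "(nat \<Rightarrow> real) \<Rightarrow> (nat \<Rightarrow> real) \<Rightarrow> nat \<Rightarrow> nat \<times> real \<times> nat" where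
  "alg_state a eps 0 = (0, 0, 0)"
| "alg_state a eps (Suc k) = alg_step a eps k (alg_state a eps k)"

text \<open>N_M: the value of the counter N when the algorithm terminates, i.e. after the
  iteration k (k \<ge> 1) in which the first coin X_k = 0 (False) is observed.\<close>
definition NM :: "(nat \<Rightarrow> real) \<Rightarrow> (nat \<Rightarrow> real) \<Rightarrow> (nat \<Rightarrow> 'w \<Rightarrow> bool) \<Rightarrow> 'w \<Rightarrow> nat" where
  "NM a eps X \<omega> = fst (alg_state a eps (LEAST k. 1 \<le> k \<and> \<not> X k \<omega>))"

end

theory Submission
  imports Defs
begin

text \<open>Whatever the value of A, the inner loop of iteration k stops at the latest at any
  N \<ge> 1 with \<open>\<epsilon>(N) \<le> 2\<^sup>-\<^sup>k/2\<close>. Hence the counter after k iterations is at most every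
  such N, and \<open>N\<^sub>M > n\<close> forces the first k coins to be 1 for every k with
  \<open>\<epsilon>(n) \<le> 2\<^sup>-\<^sup>k/2\<close>. Taking the largest such k bounds the probability by
  \<open>2\<^sup>-\<^sup>k < 4\<epsilon>(n)\<close>. Under \<open>\<epsilon>(n) \<le> K/n\<^sup>r\<close> the counter after k iterations therefore grows at
  most like \<open>2\<^sup>k\<^sup>/\<^sup>r\<close>, which the probability \<open>2\<^sup>-\<^sup>k\<close> of reaching iteration k + 1 outweighs
  since r > 1.\<close>

definition counter :: "(nat \<Rightarrow> real) \<Rightarrow> (nat \<Rightarrow> real) \<Rightarrow> nat \<Rightarrow> nat" where
  "counter a eps k = fst (alg_state a eps k)"

definition stop_time :: "(nat \<Rightarrow> 'w \<Rightarrow> bool) \<Rightarrow> 'w \<Rightarrow> nat" where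
  "stop_time X \<omega> = (LEAST k. 1 \<le> k \<and> \<not> X k \<omega>)"

definition heads_upto :: "'w measure \<Rightarrow> (nat \<Rightarrow> 'w \<Rightarrow> bool) \<Rightarrow> nat \<Rightarrow> 'w set" where
  "heads_upto M X k = {\<omega> \<in> space M. \<forall>j\<in>{1..k}. X j \<omega>}"

lemma NM_eq_counter_stop_time: "NM a eps X \<omega> = counter a eps (stop_time X \<omega>)"
  by (simp add: NM_def counter_def stop_time_def)

lemma stop_time_le: "1 \<le> j \<Longrightarrow> \<not> X j \<omega> \<Longrightarrow> stop_time X \<omega> \<le> j"
  unfolding stop_time_def by (rule Least_le) simp

lemma in_heads_upto_if_stop_time_Suc:
  assumes "\<omega> \<in> space M" "stop_time X \<omega> = Suc k"
  shows "\<omega> \<in> heads_upto M X k"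
  using assms stop_time_le[of _ X \<omega>] by (force simp: heads_upto_def)

lemma stopc_if_eps_small:
  assumes "1 \<le> m" "eps m \<le> (1/2)^k / 2"
  shows "stopc a eps A k m"
proof -
  define h :: real where "h = (1/2)^k"
  have "errv eps m = eps m" using assms(1) by (simp add: errv_def)
  \<comment> \<open>If neither (i) nor (ii) holds, then S \<le> A + h < S + E, and E \<le> h/2 forces (iii).\<close>
  then show ?thesis
    using assms(2) unfolding stopc_def cond1_def cond2_def cond3_def h_def[symmetric]
    by (cases "psum a m > A + h") auto
qed

lemma counter_Suc:
  "\<exists>A. counter a eps (Suc k) = (LEAST m. counter a eps k \<le> m \<and> stopc a eps A (Suc k) m)"
proof -
  obtain N A s where "alg_state a eps k = (N, A, s)" by (cases "alg_state a eps k") auto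
  then show ?thesis by (auto simp: counter_def alg_step_def Let_def)
qed

lemma counter_le_if_eps_small:
  assumes "1 \<le> n" "eps n \<le> (1/2)^k / 2"
  shows "counter a eps k \<le> n"
  using assms(2)
proof (induction k)
  case 0
  then show ?case by (simp add: counter_def)
next
  case (Suc k)
  then have "counter a eps k \<le> n" by (simp add: field_simps)
  moreover obtain A where
    "counter a eps (Suc k) = (LEAST m. counter a eps k \<le> m \<and> stopc a eps A (Suc k) m)"
    using counter_Suc by blast
  moreover have "stopc a eps A (Suc k) n" using stopc_if_eps_small assms(1) Suc.prems by blast
  ultimately show ?case by (simp add: Least_le)
qed

lemma NM_greater_subset_heads_upto:
  assumes "1 \<le> n" "eps n \<le> (1/2)^k / 2"
  shows "{\<omega> \<in> space M. n < NM a eps X \<omega>} \<subseteq> heads_upto M X k"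
proof safe
  fix \<omega> assume \<omega>: "\<omega> \<in> space M" "n < NM a eps X \<omega>"
  show "\<omega> \<in> heads_upto M X k"
  proof (rule ccontr)
    assume "\<omega> \<notin> heads_upto M X k"
    then obtain j where j: "j \<in> {1..k}" "\<not> X j \<omega>" using \<omega>(1) by (auto simp: heads_upto_def)
    then have "stop_time X \<omega> \<le> k" using stop_time_le[of j X \<omega>] by auto
    then have "(1/2::real)^k \<le> (1/2)^stop_time X \<omega>" by (simp add: power_decreasing)
    then have "eps n \<le> (1/2)^stop_time X \<omega> / 2" using assms(2) by linarith
    then have "counter a eps (stop_time X \<omega>) \<le> n"
      using assms(1) counter_le_if_eps_small by blast
    then show False using \<omega>(2) by (simp add: NM_eq_counter_stop_time)
  qed
qed

lemma counter_le_powr_bound: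
  assumes r: "r > 1" and K: "K > 0" and bound: "\<forall>n\<ge>n0. eps n \<le> K / real n powr r"
  shows "real (counter a eps k) \<le> (real n0 + 2) + (2*K) powr (1/r) * (2 powr (1/r))^k"
proof -
  define T where "T = (K * 2^(Suc k)) powr (1/r)"
  define m where "m = nat \<lceil>T\<rceil> + n0 + 1"
  have T: "T > 0" using K by (simp add: T_def)
  have m: "1 \<le> m" "n0 \<le> m" "T \<le> real m" by (auto simp: m_def) linarith
  have "K * 2^(Suc k) = T powr r"
    unfolding T_def powr_powr using r K by simp
  also have "\<dots> \<le> real m powr r" using m T r by (intro powr_mono2) auto
  finally have "K * 2^(Suc k) \<le> real m powr r" .
  then have "K / real m powr r \<le> K / (K * 2^(Suc k))"
    using K m(1) by (intro divide_left_mono) auto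
  then have "eps m \<le> K / (K * 2^(Suc k))"
    using bound m(2) by (meson order.trans)
  also have "\<dots> = (1/2)^k / 2" using K by (simp add: power_divide)
  finally have "real (counter a eps k) \<le> real m"
    using counter_le_if_eps_small m(1) by simp
  also have "\<dots> \<le> T + (real n0 + 2)" unfolding m_def using T by linarith
  also have "T = (2*K) powr (1/r) * (2 powr (1/r))^k"
  proof -
    have "T = ((2*K) * 2 powr real k) powr (1/r)" unfolding T_def by (simp add: powr_realpow mult_ac)
    also have "\<dots> = (2*K) powr (1/r) * (2 powr (1/r))^k"
      using K by (simp add: powr_mult powr_powr powr_power mult.commute)
    finally show ?thesis .
  qed
  finally show ?thesis by simp
qed

lemma psum_less_sum:
  assumes pos: "\<And>j. 1 \<le> j \<Longrightarrow> a j > 0" and sums: "(\<lambda>j. a (Suc j)) sums p"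
  shows "psum a n < p"
proof -
  have summable: "summable (\<lambda>j. a (Suc j))" using sums by (rule sums_summable)
  have "psum a n = (\<Sum>j<n. a (Suc j))"
    by (induction n) (simp_all add: psum_def)
  moreover have "p = (\<Sum>j. a (Suc (j + n))) + (\<Sum>j<n. a (Suc j))"
    using suminf_split_initial_segment[OF summable, of n] sums sums_unique by auto
  moreover have "0 < (\<Sum>j. a (Suc (j + n)))"
    using summable_ignore_initial_segment[OF summable, of n] pos by (intro suminf_pos) auto
  ultimately show ?thesis by linarith
qed

context prob_space
begin

lemma prob_heads_upto:
  assumes indep: "indep_vars (\<lambda>_. count_space UNIV) X {1..}"
    and q: "\<And>i. 1 \<le> i \<Longrightarrow> prob {\<omega> \<in> space M. X i \<omega>} = q"
  shows heads_upto_in_events: "heads_upto M X k \<in> events"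
    and "prob (heads_upto M X k) = q ^ k"
proof -
  define E where "E j = X j -` {True} \<inter> space M" for j
  have indep_sets: "indep_sets (\<lambda>i. {X i -` A \<inter> space M |A. A \<in> sets (count_space UNIV)}) {1..}"
    and events: "\<And>j. 1 \<le> j \<Longrightarrow> E j \<in> events"
    using indep unfolding indep_vars_def2 E_def by (auto intro: measurable_sets)
  have "heads_upto M X k \<in> events \<and> prob (heads_upto M X k) = q ^ k"
  proof (cases "k = 0")
    case True
    then show ?thesis by (simp add: heads_upto_def prob_space)
  next
    case False
    then have heads: "heads_upto M X k = (\<Inter>j\<in>{1..k}. E j)"
      by (auto simp: heads_upto_def E_def)
    have "prob (\<Inter>j\<in>{1..k}. E j) = (\<Prod>j\<in>{1..k}. prob (E j))"
      using False by (intro indep_setsD[OF indep_sets]) (auto simp: E_def)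
    also have "\<dots> = q ^ k"
      using q by (simp add: E_def vimage_def Int_def conj_commute)
    finally show ?thesis
      using False events heads by auto
  qed
  then show "heads_upto M X k \<in> events" "prob (heads_upto M X k) = q ^ k" by auto
qed

lemma prob_NM_greater:
  assumes indep: "indep_vars (\<lambda>_. count_space UNIV) X {1..}"
    and half: "\<And>i. 1 \<le> i \<Longrightarrow> prob {\<omega> \<in> space M. X i \<omega>} = 1/2"
    and n: "1 \<le> n" and eps_pos: "0 < eps n"
  shows "prob {\<omega> \<in> space M. n < NM a eps X \<omega>} < 4 * eps n"
proof -
  define k where "k = (LEAST k. (1/2::real)^k < 4 * eps n)"
  have "\<exists>k. (1/2::real)^k < 4 * eps n" using eps_pos by (intro real_arch_pow_inv) auto
  then have k: "(1/2::real)^k < 4 * eps n" unfolding k_def by (rule LeastI_ex)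
  have least: "4 * eps n \<le> (1/2)^k'" if "k' < k" for k'
    using not_less_Least[OF that[unfolded k_def]] by simp
  have "prob {\<omega> \<in> space M. n < NM a eps X \<omega>} \<le> (1/2)^k"
  proof (cases k)
    case 0
    then show ?thesis by simp
  next
    case (Suc k')
    then have "eps n \<le> (1/2)^k / 2" using least[of k'] by simp
    then have "{\<omega> \<in> space M. n < NM a eps X \<omega>} \<subseteq> heads_upto M X k"
      by (rule NM_greater_subset_heads_upto[OF n])
    then show ?thesis
      using prob_heads_upto[OF indep half] by (metis finite_measure_mono)
  qed
  with k show ?thesis by linarith
qed

text \<open>\<open>stop_time X \<omega> = 0\<close> is the junk value of LEAST when no coin is 0; the hypothesis
  \<open>f 0 = 0\<close> neutralises it.\<close>

lemma nn_integral_stop_time_le: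
  assumes indep: "indep_vars (\<lambda>_. count_space UNIV) X {1..}"
    and q: "\<And>i. 1 \<le> i \<Longrightarrow> prob {\<omega> \<in> space M. X i \<omega>} = q"
    and f0: "f 0 = 0"
  shows "(\<integral>\<^sup>+ \<omega>. f (stop_time X \<omega>) \<partial>M) \<le> (\<Sum>k. f (Suc k) * ennreal (q ^ k))"
proof -
  have pointwise: "f (stop_time X \<omega>) \<le> (\<Sum>k. f (Suc k) * indicator (heads_upto M X k) \<omega>)"
    if \<omega>: "\<omega> \<in> space M" for \<omega>
  proof (cases "stop_time X \<omega>")
    case 0
    then show ?thesis using f0 by simp
  next
    case (Suc k)
    then have "f (stop_time X \<omega>) = f (Suc k) * indicator (heads_upto M X k) \<omega>"
      using in_heads_upto_if_stop_time_Suc[OF \<omega>] by simp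
    also have "\<dots> \<le> (\<Sum>k. f (Suc k) * indicator (heads_upto M X k) \<omega>)"
      using ennreal_suminf_lessD[of "\<lambda>k. f (Suc k) * indicator (heads_upto M X k) \<omega>" _ k]
      by (meson less_irrefl not_le)
    finally show ?thesis .
  qed
  have "(\<integral>\<^sup>+ \<omega>. f (stop_time X \<omega>) \<partial>M)
      \<le> (\<integral>\<^sup>+ \<omega>. (\<Sum>k. f (Suc k) * indicator (heads_upto M X k) \<omega>) \<partial>M)"
    using pointwise by (intro nn_integral_mono) auto
  also have "\<dots> = (\<Sum>k. f (Suc k) * ennreal (q ^ k))"
    using heads_upto_in_events[OF indep q] prob_heads_upto[OF indep q]
    by (simp add: nn_integral_suminf nn_integral_cmult_indicator emeasure_eq_measure)
  finally show ?thesis .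
qed

lemma nn_integral_NM_finite:
  assumes indep: "indep_vars (\<lambda>_. count_space UNIV) X {1..}"
    and half: "\<And>i. 1 \<le> i \<Longrightarrow> prob {\<omega> \<in> space M. X i \<omega>} = 1/2"
    and r: "r > 1" and K: "K > 0" and bound: "\<forall>n\<ge>n0. eps n \<le> K / real n powr r"
  shows "(\<integral>\<^sup>+ \<omega>. ennreal (real (NM a eps X \<omega>)) \<partial>M) < \<infinity>"
proof -
  define C where "C = real n0 + 2"
  define D where "D = (2*K) powr (1/r)"
  define q where "q = (2::real) powr (1/r)"
  define g where "g k = (C + D * q^(Suc k)) * (1/2)^k" for k
  have "0 < q" by (simp add: q_def)
  have "q < 2 powr 1" unfolding q_def using r by (intro powr_less_mono) auto
  have g_eq: "g = (\<lambda>k. C * (1/2)^k + (D * q) * (q/2)^k)"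
    by (rule ext) (simp add: g_def algebra_simps power_divide)
  have "summable g"
    unfolding g_eq using \<open>0 < q\<close> \<open>q < 2 powr 1\<close>
    by (intro summable_add summable_mult summable_geometric) auto
  have g_nonneg: "0 \<le> g k" for k
    using \<open>0 < q\<close> by (simp add: g_def C_def D_def)
  have "(\<integral>\<^sup>+ \<omega>. ennreal (real (NM a eps X \<omega>)) \<partial>M)
      \<le> (\<Sum>k. ennreal (real (counter a eps (Suc k))) * ennreal ((1/2)^k))"
    unfolding NM_eq_counter_stop_time
    by (rule nn_integral_stop_time_le[OF indep half]) (simp_all add: counter_def)
  also have "\<dots> \<le> (\<Sum>k. ennreal (g k))"
  proof (intro suminf_le summableI)
    fix k
    have "real (counter a eps (Suc k)) \<le> C + D * q^(Suc k)"
      using counter_le_powr_bound[OF r K bound] unfolding C_def D_def q_def .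
    then have "real (counter a eps (Suc k)) * (1/2)^k \<le> g k"
      unfolding g_def by (rule mult_right_mono) simp
    then show "ennreal (real (counter a eps (Suc k))) * ennreal ((1/2)^k) \<le> ennreal (g k)"
      by (simp add: ennreal_mult''[symmetric] ennreal_leI)
  qed
  also have "\<dots> < \<infinity>"
    using ennreal_suminf_neq_top[OF \<open>summable g\<close> g_nonneg] by (simp add: less_top)
  finally show ?thesis .
qed

end

theorem theorem3:
  fixes M :: "'w measure" and X :: "nat \<Rightarrow> 'w \<Rightarrow> bool"
    and a :: "nat \<Rightarrow> real" and eps :: "nat \<Rightarrow> real" and p :: real
  assumes "prob_space M"
    and "prob_space.indep_vars M (\<lambda>_. count_space UNIV) X {1..}"
    and "\<And>i. 1 \<le> i \<Longrightarrow> measure M {\<omega> \<in> space M. X i \<omega>} = 1/2"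
    and "0 < p" and "p < 1"
    and "\<And>j. 1 \<le> j \<Longrightarrow> a j \<in> \<rat> \<and> a j > 0"
    and "(\<lambda>j. a (Suc j)) sums p"
    and "\<And>m n. 1 \<le> m \<Longrightarrow> m \<le> n \<Longrightarrow> eps n \<le> eps m"
    and "eps \<longlonglongrightarrow> 0"
    and "\<And>N. 1 \<le> N \<Longrightarrow> p - psum a N \<le> eps N"
  shows "(\<forall>n\<ge>1. measure M {\<omega> \<in> space M. NM a eps X \<omega> > n} < 4 * eps n) \<and>
         ((\<exists>r K n0. r > 1 \<and> K > 0 \<and> (\<forall>n\<ge>n0. eps n \<le> K / real n powr r)) \<longrightarrow>
            (\<integral>\<^sup>+ \<omega>. ennreal (real (NM a eps X \<omega>)) \<partial>M) < \<infinity>)"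
proof -
  interpret prob_space M by fact
  have "0 < eps n" if "1 \<le> n" for n
    using psum_less_sum[of a p n] assms(6,7) assms(10)[OF that] by force
  then show ?thesis
    using prob_NM_greater[OF assms(2,3)] nn_integral_NM_finite[OF assms(2,3)] by blast
qed

end
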